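(* Let $(A,* )$ be an involutive associative algebra, $(M,* )$ an involutive $A$-bimodule, and $T:M\to A$ a relative Rota-Baxter operator on $A$ with respect to $M$. Then the maps $l_T:M\otimes A\to A$, $l_T(u,a)=T(u)a-T(ua)$, and $r_T:A\otimes M\to A$, $r_T(a,u)=aT(u)-T(au)$, define (as left and right actions respectively) an involutive bimodule structure on $(A,* )$ over the involutive associative algebra $(M,\circledast,* )$, where $u\circledast v=uT(v)+T(u)v$.
   Context: An involutive associative algebra is an associative algebra $A$ with a linear map $*:A\to A$ satisfying $a^{**}=a$ and $(ab)^*=b^*a^*$. An involutive $A$-bimodule is an $A$-bimodule $M$ with a linear map $*:M\to M$ such that $u^{**}=u$, $(au)^*=u^*a^*$, $(ua)^*=a^*u^*$. A relative Rota-Baxter operator on $A$ with respect to $M$ is a linear map $T:M\to A$ with $T(u^* )=T(u)^*$ and $T(u)T(v)=T(uT(v)+T(u)v)$ for $u,v\in M$; in this situation $(M,\circledast,* )$ is an involutive associative algebra. An involutive bimodule over an involutive algebra $(N,* )$ is an $N$-bimodule $P$ with an involution satisfying $(xp)^*=p^*x^*$, $(px)^*=x^*p^*$ for $x\in N$, $p\in P$. *)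

theory Defs
  imports Complex_Main
begin

text \<open>All structures are vector spaces over a common field of type 'k; additive structure
comes from the type class ab_group_add, scalar multiplications and products are explicit.\<close>

definition bilinear_map ::
  "('k::field \<Rightarrow> 'a::ab_group_add \<Rightarrow> 'a) \<Rightarrow> ('k \<Rightarrow> 'b::ab_group_add \<Rightarrow> 'b) \<Rightarrow>
   ('k \<Rightarrow> 'c::ab_group_add \<Rightarrow> 'c) \<Rightarrow> ('a \<Rightarrow> 'b \<Rightarrow> 'c) \<Rightarrow> bool" where
  "bilinear_map sa sb sc f \<longleftrightarrow>
     (\<forall>x. Vector_Spaces.linear sb sc (f x)) \<and> (\<forall>y. Vector_Spaces.linear sa sc (\<lambda>x. f x y))"

definition assoc_algebra ::
  "('k::field \<Rightarrow> 'a::ab_group_add \<Rightarrow> 'a) \<Rightarrow> ('a \<Rightarrow> 'a \<Rightarrow> 'a) \<Rightarrow> bool" where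
  "assoc_algebra s mul \<longleftrightarrow> vector_space s \<and> bilinear_map s s s mul \<and>
     (\<forall>x y z. mul (mul x y) z = mul x (mul y z))"

definition involutive_algebra ::
  "('k::field \<Rightarrow> 'a::ab_group_add \<Rightarrow> 'a) \<Rightarrow> ('a \<Rightarrow> 'a \<Rightarrow> 'a) \<Rightarrow> ('a \<Rightarrow> 'a) \<Rightarrow> bool" where
  "involutive_algebra s mul star \<longleftrightarrow> assoc_algebra s mul \<and> Vector_Spaces.linear s s star \<and>
     (\<forall>x. star (star x) = x) \<and> (\<forall>x y. star (mul x y) = mul (star y) (star x))"

definition bimodule ::
  "('k::field \<Rightarrow> 'a::ab_group_add \<Rightarrow> 'a) \<Rightarrow> ('a \<Rightarrow> 'a \<Rightarrow> 'a) \<Rightarrow>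
   ('k \<Rightarrow> 'm::ab_group_add \<Rightarrow> 'm) \<Rightarrow> ('a \<Rightarrow> 'm \<Rightarrow> 'm) \<Rightarrow> ('m \<Rightarrow> 'a \<Rightarrow> 'm) \<Rightarrow> bool" where
  "bimodule sA mul sM l r \<longleftrightarrow> assoc_algebra sA mul \<and> vector_space sM \<and>
     bilinear_map sA sM sM l \<and> bilinear_map sM sA sM r \<and>
     (\<forall>a b u. l (mul a b) u = l a (l b u)) \<and>
     (\<forall>a b u. r u (mul a b) = r (r u a) b) \<and>
     (\<forall>a b u. r (l a u) b = l a (r u b))"

definition involutive_bimodule ::
  "('k::field \<Rightarrow> 'a::ab_group_add \<Rightarrow> 'a) \<Rightarrow> ('a \<Rightarrow> 'a \<Rightarrow> 'a) \<Rightarrow> ('a \<Rightarrow> 'a) \<Rightarrow>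
   ('k \<Rightarrow> 'm::ab_group_add \<Rightarrow> 'm) \<Rightarrow> ('a \<Rightarrow> 'm \<Rightarrow> 'm) \<Rightarrow> ('m \<Rightarrow> 'a \<Rightarrow> 'm) \<Rightarrow> ('m \<Rightarrow> 'm) \<Rightarrow> bool" where
  "involutive_bimodule sA mul starA sM l r starM \<longleftrightarrow>
     involutive_algebra sA mul starA \<and> bimodule sA mul sM l r \<and>
     Vector_Spaces.linear sM sM starM \<and> (\<forall>u. starM (starM u) = u) \<and>
     (\<forall>a u. starM (l a u) = r (starM u) (starA a)) \<and>
     (\<forall>a u. starM (r u a) = l (starA a) (starM u))"

definition relative_RB ::
  "('k::field \<Rightarrow> 'a::ab_group_add \<Rightarrow> 'a) \<Rightarrow> ('a \<Rightarrow> 'a \<Rightarrow> 'a) \<Rightarrow> ('a \<Rightarrow> 'a) \<Rightarrow>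
   ('k \<Rightarrow> 'm::ab_group_add \<Rightarrow> 'm) \<Rightarrow> ('a \<Rightarrow> 'm \<Rightarrow> 'm) \<Rightarrow> ('m \<Rightarrow> 'a \<Rightarrow> 'm) \<Rightarrow> ('m \<Rightarrow> 'm) \<Rightarrow>
   ('m \<Rightarrow> 'a) \<Rightarrow> bool" where
  "relative_RB sA mul starA sM l r starM T \<longleftrightarrow>
     Vector_Spaces.linear sM sA T \<and> (\<forall>u. T (starM u) = starA (T u)) \<and>
     (\<forall>u v. mul (T u) (T v) = T (r u (T v) + l (T u) v))"

definition RB_prod ::
  "('a \<Rightarrow> 'm \<Rightarrow> 'm::ab_group_add) \<Rightarrow> ('m \<Rightarrow> 'a \<Rightarrow> 'm) \<Rightarrow> ('m \<Rightarrow> 'a) \<Rightarrow> 'm \<Rightarrow> 'm \<Rightarrow> 'm" where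
  "RB_prod l r T u v = r u (T v) + l (T u) v"

definition lT ::
  "('a::ab_group_add \<Rightarrow> 'a \<Rightarrow> 'a) \<Rightarrow> ('m \<Rightarrow> 'a \<Rightarrow> 'm) \<Rightarrow> ('m \<Rightarrow> 'a) \<Rightarrow> 'm \<Rightarrow> 'a \<Rightarrow> 'a" where
  "lT mul r T u a = mul (T u) a - T (r u a)"

definition rT ::
  "('a::ab_group_add \<Rightarrow> 'a \<Rightarrow> 'a) \<Rightarrow> ('a \<Rightarrow> 'm \<Rightarrow> 'm) \<Rightarrow> ('m \<Rightarrow> 'a) \<Rightarrow> 'a \<Rightarrow> 'm \<Rightarrow> 'a" where
  "rT mul l T a u = mul a (T u) - T (l a u)"

end

theory Submission
  imports Defs
begin

text \<open>The Rota-Baxter identity says exactly that T (u \<circledast> v) = T u T v. Expanding by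
bilinearity, associativity of \<circledast> and the three action axioms for l_T and r_T then follow
from the bimodule axioms of M plus one application of the Rota-Baxter identity each, which
cancels the cross terms; the involution axioms follow from T \<circ> * = * \<circ> T and the
involutive bimodule axioms of M, since * reverses the order of every product.\<close>

lemma linear_diff_map:
  assumes "Vector_Spaces.linear s1 s2 f"
  shows "f (x - y) = f x - f y"
  using assms module_hom.diff module_hom_iff_linear by metis

lemma
  assumes "bilinear_map sa sb sc f"
  shows bilinear_map_add_left: "f (x + x') y = f x y + f x' y"
    and bilinear_map_add_right: "f x (y + y') = f x y + f x y'"
    and bilinear_map_diff_left: "f (x - x') y = f x y - f x' y"
    and bilinear_map_diff_right: "f x (y - y') = f x y - f x y'"
    and bilinear_map_scale_left: "f (sa c x) y = sc c (f x y)"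
    and bilinear_map_scale_right: "f x (sb c y) = sc c (f x y)"
proof -
  have left: "Vector_Spaces.linear sa sc (\<lambda>x. f x y)"
    and right: "Vector_Spaces.linear sb sc (f x)"
    using assms unfolding bilinear_map_def by blast+
  from left show "f (x + x') y = f x y + f x' y" "f (sa c x) y = sc c (f x y)"
    unfolding Vector_Spaces.linear_iff by simp_all
  from right show "f x (y + y') = f x y + f x y'" "f x (sb c y) = sc c (f x y)"
    unfolding Vector_Spaces.linear_iff by simp_all
  from left show "f (x - x') y = f x y - f x' y"
    by (rule linear_diff_map)
  from right show "f x (y - y') = f x y - f x y'"
    by (rule linear_diff_map)
qed

lemmas bilinear_map_simps =
  bilinear_map_add_left bilinear_map_add_right bilinear_map_diff_left bilinear_map_diff_right
  bilinear_map_scale_left bilinear_map_scale_right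

locale rota_baxter_operator =
  fixes sA :: "'k::field \<Rightarrow> 'a::ab_group_add \<Rightarrow> 'a" and mul :: "'a \<Rightarrow> 'a \<Rightarrow> 'a"
    and sM :: "'k \<Rightarrow> 'm::ab_group_add \<Rightarrow> 'm"
    and l :: "'a \<Rightarrow> 'm \<Rightarrow> 'm" and r :: "'m \<Rightarrow> 'a \<Rightarrow> 'm" and T :: "'m \<Rightarrow> 'a"
  assumes bimodule: "bimodule sA mul sM l r"
    and linear_T: "Vector_Spaces.linear sM sA T"
    and rota_baxter: "mul (T u) (T v) = T (r u (T v) + l (T u) v)"
begin

lemma vector_space_A: "vector_space sA"
  and vector_space_M: "vector_space sM"
  and mul_assoc: "mul (mul a b) c = mul a (mul b c)"
  and l_mul: "l (mul a b) u = l a (l b u)"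
  and r_mul: "r u (mul a b) = r (r u a) b"
  and r_l_commute: "r (l a u) b = l a (r u b)"
  using bimodule unfolding bimodule_def assoc_algebra_def by auto

lemma
  shows T_add: "T (u + v) = T u + T v"
    and T_diff: "T (u - v) = T u - T v"
    and T_scale: "T (sM c u) = sA c (T u)"
  using linear_T linear_diff_map unfolding Vector_Spaces.linear_iff by blast+

lemma linearity_simps:
  "mul (x + y) z = mul x z + mul y z" "mul x (y + z) = mul x y + mul x z"
  "mul (x - y) z = mul x z - mul y z" "mul x (y - z) = mul x y - mul x z"
  "mul (sA c x) y = sA c (mul x y)" "mul x (sA c y) = sA c (mul x y)"
  "l (a + b) u = l a u + l b u" "l a (u + v) = l a u + l a v"
  "l (a - b) u = l a u - l b u" "l a (u - v) = l a u - l a v"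
  "l (sA c a) u = sM c (l a u)" "l a (sM c u) = sM c (l a u)"
  "r (u + v) a = r u a + r v a" "r u (a + b) = r u a + r u b"
  "r (u - v) a = r u a - r v a" "r u (a - b) = r u a - r u b"
  "r (sM c u) a = sM c (r u a)" "r u (sA c a) = sM c (r u a)"
  "sA c (x + y) = sA c x + sA c y" "sA c (x - y) = sA c x - sA c y"
  "sM c (u + v) = sM c u + sM c v" "sM c (u - v) = sM c u - sM c v"
  using bimodule vector_space_A vector_space_M
  unfolding bimodule_def assoc_algebra_def module_iff_vector_space[symmetric]
  by (auto simp: bilinear_map_simps module.scale_right_distrib module.scale_right_diff_distrib)

lemma T_RB_prod: "T (RB_prod l r T u v) = mul (T u) (T v)"
  unfolding RB_prod_def by (rule rota_baxter[symmetric])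

lemma RB_prod_assoc:
  "RB_prod l r T (RB_prod l r T u v) w = RB_prod l r T u (RB_prod l r T v w)"
proof -
  have "RB_prod l r T (RB_prod l r T u v) w
      = r (RB_prod l r T u v) (T w) + l (mul (T u) (T v)) w"
    unfolding RB_prod_def[of _ _ _ "RB_prod l r T u v"] T_RB_prod ..
  also have "\<dots> = r u (mul (T v) (T w)) + l (T u) (r v (T w)) + l (T u) (l (T v) w)"
    unfolding RB_prod_def by (simp add: linearity_simps r_mul l_mul r_l_commute add_ac)
  also have "\<dots> = r u (T (RB_prod l r T v w)) + l (T u) (RB_prod l r T v w)"
    unfolding T_RB_prod unfolding RB_prod_def by (simp add: linearity_simps add_ac)
  also have "\<dots> = RB_prod l r T u (RB_prod l r T v w)"
    by (rule RB_prod_def[symmetric])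
  finally show ?thesis .
qed

lemma assoc_algebra_RB_prod: "assoc_algebra sM (RB_prod l r T)"
  unfolding assoc_algebra_def bilinear_map_def Vector_Spaces.linear_iff
  using vector_space_M RB_prod_assoc
  by (simp add: RB_prod_def linearity_simps T_add T_diff T_scale add_ac)

lemma lT_RB_prod: "lT mul r T (RB_prod l r T u v) a = lT mul r T u (lT mul r T v a)"
  unfolding lT_def T_RB_prod unfolding RB_prod_def
  by (simp add: linearity_simps T_add T_diff mul_assoc r_mul[symmetric] l_mul r_l_commute
      rota_baxter[of u "r v a"] algebra_simps)

lemma rT_RB_prod: "rT mul l T a (RB_prod l r T u v) = rT mul l T (rT mul l T a u) v"
  unfolding rT_def T_RB_prod unfolding RB_prod_def
  by (simp add: linearity_simps T_add T_diff mul_assoc r_mul[symmetric] l_mul r_l_commute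
      rota_baxter[of "l a u" v] algebra_simps)

lemma rT_lT_commute: "rT mul l T (lT mul r T u a) v = lT mul r T u (rT mul l T a v)"
  unfolding rT_def lT_def
  by (simp add: linearity_simps T_add T_diff mul_assoc r_mul[symmetric] l_mul r_l_commute
      rota_baxter[of "r u a" v] rota_baxter[of u "l a v"] algebra_simps)

lemma bimodule_lT_rT: "bimodule sM (RB_prod l r T) sA (lT mul r T) (rT mul l T)"
  unfolding bimodule_def bilinear_map_def Vector_Spaces.linear_iff
  using assoc_algebra_RB_prod vector_space_A vector_space_M lT_RB_prod rT_RB_prod rT_lT_commute
  by (simp add: lT_def rT_def linearity_simps T_add T_diff T_scale algebra_simps)

end

locale involutive_rota_baxter_operator = rota_baxter_operator +
  fixes starA and starM
  assumes involutive_bimodule: "involutive_bimodule sA mul starA sM l r starM"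
    and T_star: "T (starM u) = starA (T u)"
begin

lemma
  shows starA_add: "starA (a + b) = starA a + starA b"
    and starA_scale: "starA (sA c a) = sA c (starA a)"
    and starA_involutive: "starA (starA a) = a"
    and starA_mul: "starA (mul a b) = mul (starA b) (starA a)"
    and starM_add: "starM (u + v) = starM u + starM v"
    and starM_scale: "starM (sM c u) = sM c (starM u)"
    and starM_involutive: "starM (starM u) = u"
    and starM_l: "starM (l a u) = r (starM u) (starA a)"
    and starM_r: "starM (r u a) = l (starA a) (starM u)"
  using involutive_bimodule
  unfolding involutive_bimodule_def involutive_algebra_def Vector_Spaces.linear_iff by auto

lemma starA_diff: "starA (a - b) = starA a - starA b"
  using involutive_bimodule linear_diff_map
  unfolding involutive_bimodule_def involutive_algebra_def by blast

lemma starM_RB_prod: "starM (RB_prod l r T u v) = RB_prod l r T (starM v) (starM u)"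
  unfolding RB_prod_def by (simp add: starM_add starM_l starM_r T_star add.commute)

lemma starA_lT: "starA (lT mul r T u a) = rT mul l T (starA a) (starM u)"
  unfolding lT_def rT_def by (simp add: starA_diff starA_mul starM_r T_star[symmetric])

lemma starA_rT: "starA (rT mul l T a u) = lT mul r T (starM u) (starA a)"
  unfolding lT_def rT_def by (simp add: starA_diff starA_mul starM_l T_star[symmetric])

lemma involutive_algebra_RB_prod: "involutive_algebra sM (RB_prod l r T) starM"
  unfolding involutive_algebra_def Vector_Spaces.linear_iff
  using assoc_algebra_RB_prod vector_space_M
  by (simp add: starM_add starM_scale starM_involutive starM_RB_prod)

lemma involutive_bimodule_lT_rT:
  "involutive_bimodule sM (RB_prod l r T) starM sA (lT mul r T) (rT mul l T) starA"
  unfolding involutive_bimodule_def Vector_Spaces.linear_iff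
  using involutive_algebra_RB_prod bimodule_lT_rT vector_space_A
  by (simp add: starA_add starA_scale starA_involutive starA_lT starA_rT)

end

theorem mainTheorem4:
  fixes sA :: "'k::field \<Rightarrow> 'a::ab_group_add \<Rightarrow> 'a"
    and mul :: "'a \<Rightarrow> 'a \<Rightarrow> 'a" and starA :: "'a \<Rightarrow> 'a"
    and sM :: "'k \<Rightarrow> 'm::ab_group_add \<Rightarrow> 'm"
    and l :: "'a \<Rightarrow> 'm \<Rightarrow> 'm" and r :: "'m \<Rightarrow> 'a \<Rightarrow> 'm" and starM :: "'m \<Rightarrow> 'm"
    and T :: "'m \<Rightarrow> 'a"
  assumes "involutive_bimodule sA mul starA sM l r starM"
    and "relative_RB sA mul starA sM l r starM T"
  shows "involutive_bimodule sM (RB_prod l r T) starM sA (lT mul r T) (rT mul l T) starA"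
proof -
  interpret involutive_rota_baxter_operator sA mul sM l r T starA starM
    using assms unfolding relative_RB_def
    by (intro involutive_rota_baxter_operator.intro rota_baxter_operator.intro
        involutive_rota_baxter_operator_axioms.intro) (auto simp: involutive_bimodule_def)
  show ?thesis by (rule involutive_bimodule_lT_rT)
qed

end
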